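(* Let $M$ be the monoid (algebra in sets) generated by $a,b,c,d,e,f,g,h,i,j,k,l$ subject to the relations $da=eb$, $fb=hc$, $gb=ic$, $kh=li$ and $je=kf=lg$. Then $M$ is basic-set, i.e. for all $u,v,x\in M$, $ux=vx$ implies $u=v$.
   Context: For an associative algebra viewed as an operad concentrated in arity $1$, the basic-set condition (injectivity of $\nu\mapsto\gamma(\nu;\nu_1)$) is right cancellativity of the underlying monoid. *)

theory Defs
  imports Main
begin

datatype gen = a | b | c | d | e | f | g | h | i | j | k | l

definition rels :: "(gen list \<times> gen list) set" where
  "rels = {([d,a],[e,b]), ([f,b],[h,c]), ([g,b],[i,c]), ([k,h],[l,i]),
           ([j,e],[k,f]), ([k,f],[l,g])}"

text \<open>The monoid congruence on the free monoid generated by the relations.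
  The monoid M is the quotient of words by this congruence.\<close>
inductive meq :: "gen list \<Rightarrow> gen list \<Rightarrow> bool" where
  rel: "(u, v) \<in> rels \<Longrightarrow> meq (p @ u @ q) (p @ v @ q)"
| refl: "meq w w"
| sym: "meq u v \<Longrightarrow> meq v u"
| trans: "meq u v \<Longrightarrow> meq v w \<Longrightarrow> meq u w"

end

theory Submission
  imports Defs
begin

text \<open>Orient the relations as the rewrite rules \<open>eb \<rightarrow> da\<close>, \<open>hc \<rightarrow> fb\<close>,
  \<open>ic \<rightarrow> gb\<close>, \<open>li \<rightarrow> kh\<close>, \<open>kf \<rightarrow> je\<close>, \<open>lg \<rightarrow> je\<close> and the derived rule
  \<open>khc \<rightarrow> jda\<close>. Appending a letter to a word and firing at most one rule at the right end
  gives a right action \<open>w\<cdot>y\<close> of the generators on words with \<open>w\<cdot>y \<equiv> wy\<close> in \<open>M\<close>.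
  This action respects the defining relations, and every letter acts injectively, since the
  rule that fired can be read off the result. So \<open>ux \<equiv> vx\<close> gives
  \<open>([]\<cdot>u)\<cdot>x = ([]\<cdot>v)\<cdot>x\<close>, hence \<open>[]\<cdot>u = []\<cdot>v\<close>, and \<open>u \<equiv> []\<cdot>u = []\<cdot>v \<equiv> v\<close>.\<close>

lemma meq_append: "meq u v \<Longrightarrow> meq (p @ u @ q) (p @ v @ q)"
proof (induction arbitrary: p q rule: meq.induct)
  case (rel u v p' q')
  then show ?case using meq.rel[of u v "p @ p'" "q' @ q"] by simp
next
  case (trans u v w)
  then show ?case by (blast intro: meq.trans)
qed (auto intro: meq.intros)

lemma meq_append_left: "meq u v \<Longrightarrow> meq (p @ u) (p @ v)"
  using meq_append[of u v p "[]"] by simp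

lemma meq_Cons: "meq u v \<Longrightarrow> meq (x # u) (x # v)"
  using meq_append[of u v "[x]" "[]"] by simp

lemma meq_rewrite_rules:
  "meq [e,b] [d,a]" "meq [h,c] [f,b]" "meq [i,c] [g,b]" "meq [l,i] [k,h]"
  "meq [k,f] [j,e]" "meq [l,g] [j,e]" "meq [k,h,c] [j,d,a]"
proof -
  have step: "meq (p @ v @ q) (p @ u @ q)" if "(u, v) \<in> rels" for u v p q
    using meq.rel[OF that] by (rule meq.sym)
  show "meq [e,b] [d,a]" "meq [h,c] [f,b]" "meq [i,c] [g,b]" "meq [l,i] [k,h]" "meq [k,f] [j,e]"
    using step[of _ _ "[]" "[]"] by (simp_all add: rels_def)
  have "meq [l,g] [k,f]" "meq [k,f] [j,e]"
    using step[of "[k,f]" "[l,g]" "[]" "[]"] step[of "[j,e]" "[k,f]" "[]" "[]"]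
    by (simp_all add: rels_def)
  then show "meq [l,g] [j,e]" by (rule meq.trans)
  have "meq [k,h,c] [k,f,b]" "meq [k,f,b] [j,e,b]" "meq [j,e,b] [j,d,a]"
    using step[of "[f,b]" "[h,c]" "[k]" "[]"] step[of "[j,e]" "[k,f]" "[]" "[b]"]
      step[of "[d,a]" "[e,b]" "[j]" "[]"]
    by (simp_all add: rels_def)
  then show "meq [k,h,c] [j,d,a]" by (blast intro: meq.trans)
qed

text \<open>Normal words are stored reversed, so that the end where rewriting happens is the head
  of the list: \<open>push N y\<close> is the reversed normal form of \<open>rev N @ [y]\<close>.\<close>
definition push :: "gen list \<Rightarrow> gen \<Rightarrow> gen list" where
  "push N y = (case (y, N) of
     (b, e # P) \<Rightarrow> a # d # P
   | (c, h # k # P) \<Rightarrow> a # d # j # P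
   | (c, h # P) \<Rightarrow> b # f # P
   | (c, i # P) \<Rightarrow> b # g # P
   | (i, l # P) \<Rightarrow> h # k # P
   | (f, k # P) \<Rightarrow> e # j # P
   | (g, l # P) \<Rightarrow> e # j # P
   | _ \<Rightarrow> y # N)"

definition pop :: "gen list \<Rightarrow> gen \<Rightarrow> gen list" where
  "pop R y = (case (y, R) of
     (b, a # d # P) \<Rightarrow> e # P
   | (c, a # d # j # P) \<Rightarrow> h # k # P
   | (c, b # f # P) \<Rightarrow> h # P
   | (c, b # g # P) \<Rightarrow> i # P
   | (i, h # k # P) \<Rightarrow> l # P
   | (f, e # j # P) \<Rightarrow> k # P
   | (g, e # j # P) \<Rightarrow> l # P
   | _ \<Rightarrow> tl R)"

lemma pop_push [simp]: "pop (push N y) y = N"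
  unfolding push_def pop_def by (cases y) (auto split: list.split gen.split)

lemma meq_push: "meq (rev N @ [y]) (rev (push N y))"
  unfolding push_def
  by (cases y)
     (auto intro: meq.refl meq_append_left meq_Cons meq_rewrite_rules
           split: list.split gen.split)

lemma meq_foldl_push: "meq (rev N @ w) (rev (foldl push N w))"
proof (induction w arbitrary: N)
  case Nil
  show ?case by (simp add: meq.refl)
next
  case (Cons y w)
  have "meq (rev N @ [y] @ w) (rev (push N y) @ w)"
    using meq_append[OF meq_push, of "[]" N y w] by simp
  with Cons.IH[of "push N y"] show ?case by (auto intro: meq.trans)
qed

lemma foldl_push_rels: "(u, v) \<in> rels \<Longrightarrow> foldl push N u = foldl push N v"
  by (auto simp: rels_def push_def split: list.split gen.split)

lemma foldl_push_meq: "meq u v \<Longrightarrow> foldl push N u = foldl push N v"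
  by (induction arbitrary: N rule: meq.induct) (auto simp: foldl_push_rels)

lemma foldl_push_cancel: "foldl push N x = foldl push M x \<Longrightarrow> N = M"
proof (induction x arbitrary: N M)
  case (Cons y x)
  then have "push N y = push M y" by simp
  then show "N = M" by (metis pop_push)
qed simp

theorem mainTheorem9:
  fixes u v x :: "gen list"
  assumes "meq (u @ x) (v @ x)"
  shows "meq u v"
proof -
  have "foldl push (foldl push [] u) x = foldl push (foldl push [] v) x"
    using foldl_push_meq[OF assms, of "[]"] by simp
  then have "foldl push [] u = foldl push [] v"
    by (rule foldl_push_cancel)
  with meq_foldl_push[of "[]" u] meq_foldl_push[of "[]" v] show ?thesis
    by (auto intro: meq.trans meq.sym)
qed

end
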